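(* Let $\underline{L}$ be a finite lattice and $\underline{S}=[u,v]$ an interval of $\underline{L}$. If $\underline{S}$ is dismantling for $\underline{L}$, then $\underline{L}\setminus\underline{S}$ is a complete sublattice of $\underline{L}$ (i.e. $L\setminus S$ is closed under arbitrary joins and meets taken in $\underline{L}$, including the empty ones, so it contains the top and bottom of $\underline{L}$).
   Context: For $u\le v$ in a lattice $L$, $[u,v]=\{x\mid u\le x\le v\}$, $(v]=\{x\mid x\le v\}$, $[u)=\{x\mid u\le x\}$. An interval $[u,v]$ of $L$ is quasi-dismantling for $L$ if $u$ is supremum-prime in $(v]$ (for all $x,y\in(v]$, $u\le x\vee y$ implies $u\le x$ or $u\le y$) and $v$ is infimum-prime in $[u)$ (for all $x,y\in[u)$, $x\wedge y\le v$ implies $x\le v$ or $y\le v$). It is dismantling for $L$ if moreover $u\neq\bot$ and $v\neq\top$, where $\bot,\top$ are the least and greatest elements of $L$. *)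

theory Defs
  imports Main "HOL-Library.Finite_Lattice"
begin

definition interval :: "'a::order \<Rightarrow> 'a \<Rightarrow> 'a set" where
  "interval u v = {x. u \<le> x \<and> x \<le> v}"

definition sup_prime_in_downset :: "'a::lattice \<Rightarrow> 'a \<Rightarrow> bool" where
  "sup_prime_in_downset u v \<longleftrightarrow>
     (\<forall>x y. x \<le> v \<longrightarrow> y \<le> v \<longrightarrow> u \<le> sup x y \<longrightarrow> u \<le> x \<or> u \<le> y)"

definition inf_prime_in_upset :: "'a::lattice \<Rightarrow> 'a \<Rightarrow> bool" where
  "inf_prime_in_upset v u \<longleftrightarrow>
     (\<forall>x y. u \<le> x \<longrightarrow> u \<le> y \<longrightarrow> inf x y \<le> v \<longrightarrow> x \<le> v \<or> y \<le> v)"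

definition quasi_dismantling :: "'a::lattice \<Rightarrow> 'a \<Rightarrow> bool" where
  "quasi_dismantling u v \<longleftrightarrow> u \<le> v \<and> sup_prime_in_downset u v \<and> inf_prime_in_upset v u"

definition dismantling :: "'a::bounded_lattice \<Rightarrow> 'a \<Rightarrow> bool" where
  "dismantling u v \<longleftrightarrow> quasi_dismantling u v \<and> u \<noteq> bot \<and> v \<noteq> top"

end

theory Submission
  imports Defs
begin

text \<open>By induction on a finite family, primeness of \<open>u\<close> for binary joins below \<open>v\<close>
  extends to all finite joins below \<open>v\<close>; the empty join is excluded by \<open>u \<noteq> \<bottom>\<close>.
  So if a join of elements outside \<open>[u,v]\<close> landed in \<open>[u,v]\<close>, all of them being below \<open>v\<close>,
  one of them would lie above \<open>u\<close>, hence in \<open>[u,v]\<close>. Meets are dual.\<close>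

lemma sup_prime_in_downset_Sup:
  fixes u v :: "'a::complete_lattice"
  assumes prime: "sup_prime_in_downset u v" and "u \<noteq> bot"
    and "finite B" and "\<forall>b\<in>B. b \<le> v" and "u \<le> Sup B"
  shows "\<exists>b\<in>B. u \<le> b"
  using \<open>finite B\<close> assms(4,5)
proof (induction B rule: finite_induct)
  case empty
  then show ?case using \<open>u \<noteq> bot\<close> by (simp add: bot_unique)
next
  case (insert x F)
  have "x \<le> v" and "Sup F \<le> v" and "u \<le> sup x (Sup F)"
    using insert.prems by (simp_all add: Sup_least)
  then have "u \<le> x \<or> u \<le> Sup F"
    using prime unfolding sup_prime_in_downset_def by blast
  then show ?case using insert by auto
qed

lemma inf_prime_in_upset_Inf:
  fixes u v :: "'a::complete_lattice"
  assumes prime: "inf_prime_in_upset v u" and "v \<noteq> top"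
    and "finite B" and "\<forall>b\<in>B. u \<le> b" and "Inf B \<le> v"
  shows "\<exists>b\<in>B. b \<le> v"
  using \<open>finite B\<close> assms(4,5)
proof (induction B rule: finite_induct)
  case empty
  then show ?case using \<open>v \<noteq> top\<close> by (simp add: top_unique)
next
  case (insert x F)
  have "u \<le> x" and "u \<le> Inf F" and "inf x (Inf F) \<le> v"
    using insert.prems by (simp_all add: Inf_greatest)
  then have "x \<le> v \<or> Inf F \<le> v"
    using prime unfolding inf_prime_in_upset_def by blast
  then show ?case using insert by auto
qed

lemma Sup_notin_interval:
  fixes u v :: "'a::complete_lattice"
  assumes "sup_prime_in_downset u v" and "u \<noteq> bot"
    and "finite A" and "A \<subseteq> - interval u v"
  shows "Sup A \<notin> interval u v"
proof
  assume "Sup A \<in> interval u v"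
  then have below_v: "\<forall>b\<in>A. b \<le> v" and "u \<le> Sup A"
    unfolding interval_def by (auto intro: order_trans Sup_upper)
  then obtain b where "b \<in> A" and "u \<le> b"
    using sup_prime_in_downset_Sup assms(1-3) by blast
  with below_v have "b \<in> interval u v" unfolding interval_def by blast
  with \<open>b \<in> A\<close> \<open>A \<subseteq> - interval u v\<close> show False by blast
qed

lemma Inf_notin_interval:
  fixes u v :: "'a::complete_lattice"
  assumes "inf_prime_in_upset v u" and "v \<noteq> top"
    and "finite A" and "A \<subseteq> - interval u v"
  shows "Inf A \<notin> interval u v"
proof
  assume "Inf A \<in> interval u v"
  then have above_u: "\<forall>b\<in>A. u \<le> b" and "Inf A \<le> v"
    unfolding interval_def by (auto intro: order_trans Inf_lower)
  then obtain b where "b \<in> A" and "b \<le> v"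
    using inf_prime_in_upset_Inf assms(1-3) by blast
  with above_u have "b \<in> interval u v" unfolding interval_def by blast
  with \<open>b \<in> A\<close> \<open>A \<subseteq> - interval u v\<close> show False by blast
qed

theorem corollary1:
  fixes u v :: "'a::finite_lattice"
  assumes "u \<le> v"
    and "dismantling u v"
  shows "\<forall>A. A \<subseteq> - interval u v \<longrightarrow>
           Sup A \<in> - interval u v \<and> Inf A \<in> - interval u v"
proof (intro allI impI)
  fix A :: "'a set"
  assume "A \<subseteq> - interval u v"
  moreover have "finite A" by simp
  moreover have "sup_prime_in_downset u v" "u \<noteq> bot"
    and "inf_prime_in_upset v u" "v \<noteq> top"
    using \<open>dismantling u v\<close> unfolding dismantling_def quasi_dismantling_def by auto
  ultimately show "Sup A \<in> - interval u v \<and> Inf A \<in> - interval u v"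
    using Sup_notin_interval Inf_notin_interval by blast
qed

end
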